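(* Consider the control-affine system $\dot x = f(x)+g(x)u$ with $x\in\mathbb R^n$, $f:\mathbb R^n\to\mathbb R^n$, $g:\mathbb R^n\to\mathbb R^{n\times m}$ continuous, and input constraint set $\mathcal U = \{v\in\mathbb R^m \mid A_u v\leq b_u\}$. Let $h_G:\mathbb R^n\to\mathbb R$ be continuously differentiable and $S_G = \{x\mid h_G(x)\leq 0\}$. Fix $\mu>1$, $\gamma_1 = 1+\frac1\mu$, $\gamma_2 = 1-\frac1\mu$, $\alpha_1,\alpha_2>0$, a diagonal matrix $H = \mathrm{diag}\{p_{u_1},\dots,p_{u_m},p_1\}$ with positive entries, and $F = [\mathbf 0_m^T\ \ q_1]^T$ with $q_1>0$. For each $x$, consider the quadratic program \[ \min_{v\in\mathbb R^m,\ \delta_1\in\mathbb R}\ \tfrac12 z^T H z + F^T z,\qquad z = [v^T\ \ \delta_1]^T, \] subject to \[ A_u v\leq b_u,\qquad L_fh_G(x) + L_gh_G(x)v \leq \delta_1 h_G(x) - \alpha_1\max\{0,h_G(x)\}^{\gamma_1} - \alpha_2\max\{0,h_G(x)\}^{\gamma_2}. \] If $\mathcal U$ is non-empty, then this quadratic program is feasible (its constraint set is non-empty) for all $x\notin S_G$.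
   Context: $L_fh_G(x) = \frac{\partial h_G}{\partial x}(x) f(x)$ and $L_gh_G(x) = \frac{\partial h_G}{\partial x}(x) g(x)$ denote Lie derivatives; $\mathbf 0_m$ is the zero vector in $\mathbb R^m$. *)

theory Defs
  imports "HOL-Analysis.Analysis"
begin

end

theory Submission
  imports Defs
begin

(* Outside S_G we have h_G x > 0, so the relaxation variable \<delta>\<^sub>1 multiplies a positive
   number: for any admissible input v the CBF constraint holds once \<delta>\<^sub>1 is large enough. *)

lemma ex_factor_le_diff:
  fixes h a c :: real
  assumes "h > 0"
  shows "\<exists>\<delta>. a \<le> \<delta> * h - c"
proof
  show "a \<le> ((a + c) / h) * h - c"
    using assms by simp
qed

theorem lemma3:
  fixes f :: "real^'n \<Rightarrow> real^'n"
    and g :: "real^'n \<Rightarrow> real^'m^'n"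
    and A_u :: "real^'m^'k" and b_u :: "real^'k"
    and h_G :: "real^'n \<Rightarrow> real"
    and grad_h :: "real^'n \<Rightarrow> real^'n"
    and \<mu> \<alpha>\<^sub>1 \<alpha>\<^sub>2 p\<^sub>1 q\<^sub>1 :: real
    and p_u :: "real^'m"
  assumes f_cont: "continuous_on UNIV f"
    and g_cont: "continuous_on UNIV g"
    and h_deriv: "\<And>x. (h_G has_derivative (\<lambda>y. grad_h x \<bullet> y)) (at x)"
    and h_C1: "continuous_on UNIV grad_h"
    and mu: "\<mu> > 1"
    and alpha: "\<alpha>\<^sub>1 > 0" "\<alpha>\<^sub>2 > 0"
    and H_pos: "\<And>i. p_u $ i > 0" "p\<^sub>1 > 0"
    and q_pos: "q\<^sub>1 > 0"
    and U_nonempty: "{v. A_u *v v \<le> b_u} \<noteq> {}"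
    and x_out: "x \<notin> {x. h_G x \<le> 0}"
  shows "\<exists>(v::real^'m) (\<delta>\<^sub>1::real). A_u *v v \<le> b_u \<and>
           grad_h x \<bullet> f x + grad_h x \<bullet> (g x *v v)
             \<le> \<delta>\<^sub>1 * h_G x
                - \<alpha>\<^sub>1 * (max 0 (h_G x)) powr (1 + 1/\<mu>)
                - \<alpha>\<^sub>2 * (max 0 (h_G x)) powr (1 - 1/\<mu>)"
proof -
  obtain v where v_admissible: "A_u *v v \<le> b_u"
    using U_nonempty by blast
  have "h_G x > 0"
    using x_out by simp
  then obtain \<delta>\<^sub>1 where "grad_h x \<bullet> f x + grad_h x \<bullet> (g x *v v)
      \<le> \<delta>\<^sub>1 * h_G x - (\<alpha>\<^sub>1 * (max 0 (h_G x)) powr (1 + 1/\<mu>)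
                     + \<alpha>\<^sub>2 * (max 0 (h_G x)) powr (1 - 1/\<mu>))"
    using ex_factor_le_diff by blast
  then show ?thesis
    using v_admissible by (auto simp: diff_diff_eq)
qed

end
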